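(* Let $\mathcal V=\{[x^{q^4+q^2+1},\,x^{q^3+q+1},\,x^{q^4+q+1}] : x\in\mathbb F_{q^6}\setminus\{0\}\}$, the $\langle\phi_3\rangle$-orbit of $[1,1,1]$. Then no four distinct points of $\mathcal V$ are contained in a plane of $\mathrm{PG}(U_3)\cong\mathrm{PG}(13,q)$ (i.e. $\mathcal V$ is a $4$-general set).
   Context: $q$ is a prime power and $\omega$ is a primitive element of $\mathbb F_{q^6}$. Let $U_3=\mathbb F_{q^2}\times\mathbb F_{q^6}\times\mathbb F_{q^6}$, a $14$-dimensional $\mathbb F_q$-vector space (note $x^{q^4+q^2+1}\in\mathbb F_{q^2}$ for $x\in\mathbb F_{q^6}$), so $\mathrm{PG}(U_3)\cong\mathrm{PG}(13,q)$; write $[a,b,c]$ for the point spanned by $(a,b,c)\ne 0$. Let $\phi_3$ be the projectivity of $\mathrm{PG}(U_3)$ induced by the $\mathbb F_q$-linear map $(a,b,c)\mapsto(\omega^{q^4+q^2+1}a,\ \omega^{q^3+q+1}b,\ \omega^{q^4+q+1}c)$. A $4$-general set is a set of points any four of which are in general position (no four in a plane), spanning the space, with some solid containing five of its points. *)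

theory Defs
  imports "HOL-Computational_Algebra.Primes"
begin

text \<open>The field F_{q^6} is a finite field type 'a with CARD('a) = q^6.
  Subfields: F_q = {c. c^q = c}, F_{q^2} = {c. c^(q^2) = c}.\<close>

definition Fq :: "nat \<Rightarrow> 'a::{finite,field} set" where
  "Fq q = {c. c ^ q = c}"

definition Fq2 :: "nat \<Rightarrow> 'a::{finite,field} set" where
  "Fq2 q = {c. c ^ (q^2) = c}"

type_synonym 'a vec3 = "'a \<times> 'a \<times> 'a"

definition U3 :: "nat \<Rightarrow> ('a::{finite,field}) vec3 set" where
  "U3 q = Fq2 q \<times> UNIV \<times> UNIV"

definition vzero :: "('a::field) vec3" where
  "vzero = (0, 0, 0)"

definition vadd :: "('a::field) vec3 \<Rightarrow> 'a vec3 \<Rightarrow> 'a vec3" where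
  "vadd u w = (fst u + fst w, fst (snd u) + fst (snd w), snd (snd u) + snd (snd w))"

definition vsc :: "'a::field \<Rightarrow> 'a vec3 \<Rightarrow> 'a vec3" where
  "vsc c u = (c * fst u, c * fst (snd u), c * snd (snd u))"

definition point :: "nat \<Rightarrow> ('a::{finite,field}) vec3 \<Rightarrow> 'a vec3 set" where
  "point q u = {vsc c u | c. c \<in> Fq q}"

definition indep3 :: "nat \<Rightarrow> ('a::{finite,field}) vec3 \<Rightarrow> 'a vec3 \<Rightarrow> 'a vec3 \<Rightarrow> bool" where
  "indep3 q w1 w2 w3 \<longleftrightarrow>
     (\<forall>a\<in>Fq q. \<forall>b\<in>Fq q. \<forall>c\<in>Fq q.
        vadd (vsc a w1) (vadd (vsc b w2) (vsc c w3)) = vzero \<longrightarrow> a = 0 \<and> b = 0 \<and> c = 0)"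

definition is_plane :: "nat \<Rightarrow> ('a::{finite,field}) vec3 set \<Rightarrow> bool" where
  "is_plane q \<Pi> \<longleftrightarrow> (\<exists>w1\<in>U3 q. \<exists>w2\<in>U3 q. \<exists>w3\<in>U3 q. indep3 q w1 w2 w3 \<and>
      \<Pi> = {vadd (vsc a w1) (vadd (vsc b w2) (vsc c w3)) | a b c.
              a \<in> Fq q \<and> b \<in> Fq q \<and> c \<in> Fq q})"

definition vV :: "nat \<Rightarrow> 'a::{finite,field} \<Rightarrow> 'a vec3" where
  "vV q x = (x ^ (q^4 + q^2 + 1), x ^ (q^3 + q + 1), x ^ (q^4 + q + 1))"

definition Vpts :: "nat \<Rightarrow> ('a::{finite,field}) vec3 set set" where
  "Vpts q = {point q (vV q x) | x. x \<noteq> 0}"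

end

theory Submission
  imports Defs
begin

(* For x \<noteq> 0 put u(x) = x^q / x.  The point of V spanned by the vector of x depends only on
   u(x), since two x with the same u differ by a factor in F_q.  For a, b, c in F_{q^6} the
   F_q-linear form separating_form q a b c takes the value
   (a x - x^q) (b x - x^q)^(q^2) (c x - x^q)^(q^4) on the vector of x, so it vanishes on a point
   of V exactly when the u-value of the point is a, b or c.  Given four points of V with distinct
   u-values in a plane spanned by w1, w2, w3, the four forms vanishing on all but one of them give
   vectors in F^3 (their values at w1, w2, w3) that are biorthogonal to the F_q-coordinate
   vectors of the points; but F^3 contains no four biorthogonal vectors. *)

lemma of_nat_card_UNIV_eq_0: "of_nat (card (UNIV :: 'a set)) = (0 :: 'a::{finite,comm_ring_1})"
proof -
  have "(\<Sum>x\<in>UNIV. x + 1) = (\<Sum>x\<in>UNIV. x :: 'a)"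
    by (rule sum.reindex_bij_witness[of _ "\<lambda>y. y - 1" "\<lambda>y. y + 1"]) auto
  then show ?thesis
    by (simp add: sum.distrib)
qed

lemma CHAR_eq_if_card_UNIV_eq_prime_power:
  assumes "prime p" and "card (UNIV :: 'a::{finite,field} set) = p ^ n"
  shows "CHAR('a) = p"
proof -
  have "prime CHAR('a)"
    by (simp add: prime_CHAR_semidom finite_imp_CHAR_pos)
  moreover have "CHAR('a) dvd card (UNIV :: 'a set)"
    using of_nat_card_UNIV_eq_0 of_nat_eq_0_iff_char_dvd by blast
  ultimately show ?thesis
    using assms prime_dvd_power primes_dvd_imp_eq by metis
qed

(* The library's finite_field_power_card_eq_same needs the sort finite_field, which a type
   variable of sort {finite,field} is not known to have. *)
lemma finite_field_power_card_UNIV_eq_self: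
  fixes x :: "'a::{finite,field}"
  shows "x ^ card (UNIV :: 'a set) = x"
proof (cases "x = 0")
  case False
  have "(\<Prod>y\<in>UNIV - {0}. x * y) = (\<Prod>y\<in>UNIV - {0}. y)"
    by (rule prod.reindex_bij_witness[of _ "\<lambda>y. y / x" "\<lambda>y. x * y"]) (use False in auto)
  moreover have "(\<Prod>y\<in>UNIV - {0::'a}. y) \<noteq> 0"
    by simp
  ultimately have "x ^ (card (UNIV :: 'a set) - 1) = 1"
    by (simp add: prod.distrib card_Diff_singleton)
  moreover have "card (UNIV :: 'a set) = Suc (card (UNIV :: 'a set) - 1)"
    by (simp add: finite_UNIV_card_ge_0)
  ultimately show ?thesis
    by (metis power_Suc mult_1_right)
qed (simp add: finite_UNIV_card_ge_0)

fun dot3 :: "'a::comm_ring_1 vec3 \<Rightarrow> 'a vec3 \<Rightarrow> 'a" where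
  "dot3 (a1, a2, a3) (b1, b2, b3) = a1 * b1 + a2 * b2 + a3 * b3"

fun cross3 :: "'a::comm_ring_1 vec3 \<Rightarrow> 'a vec3 \<Rightarrow> 'a vec3" where
  "cross3 (a1, a2, a3) (b1, b2, b3) = (a2 * b3 - a3 * b2, a3 * b1 - a1 * b3, a1 * b2 - a2 * b1)"

definition det3 :: "'a::comm_ring_1 vec3 \<Rightarrow> 'a vec3 \<Rightarrow> 'a vec3 \<Rightarrow> 'a" where
  "det3 u v w = dot3 u (cross3 v w)"

lemma det3_mult_det3:
  "det3 r1 r2 r3 * det3 a b c =
     det3 (dot3 r1 a, dot3 r1 b, dot3 r1 c) (dot3 r2 a, dot3 r2 b, dot3 r2 c) (dot3 r3 a, dot3 r3 b, dot3 r3 c)"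
  by (cases r1, cases r2, cases r3, cases a, cases b, cases c) (simp add: det3_def algebra_simps)

lemma vsc_det3_eq:
  "vsc (det3 a b c) v =
     vadd (vsc (dot3 v a) (cross3 b c)) (vadd (vsc (dot3 v b) (cross3 c a)) (vsc (dot3 v c) (cross3 a b)))"
  by (cases v, cases a, cases b, cases c) (simp add: det3_def vsc_def vadd_def algebra_simps)

lemma card_le_3_if_biorthogonal:
  fixes r g :: "'i \<Rightarrow> 'a::field vec3"
  assumes biorth: "\<And>i k. i \<in> I \<Longrightarrow> k \<in> I \<Longrightarrow> dot3 (r i) (g k) = 0 \<longleftrightarrow> i \<noteq> k"
  shows "card I \<le> 3"
proof (rule ccontr)
  assume "\<not> card I \<le> 3"
  then have "4 \<le> card I"
    by simp
  then obtain T where "T \<subseteq> I" "card T = 4"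
    by (rule obtain_subset_with_card_n)
  then obtain i4 where "i4 \<in> T"
    by fastforce
  with \<open>card T = 4\<close> have "card (T - {i4}) = 3"
    by simp
  then obtain i1 i2 i3 where T: "T - {i4} = {i1, i2, i3}" and "i1 \<noteq> i2" "i2 \<noteq> i3" "i1 \<noteq> i3"
    by (auto simp: card_3_iff)
  with \<open>i4 \<in> T\<close> \<open>T \<subseteq> I\<close> have "{i1, i2, i3, i4} \<subseteq> I" "i4 \<notin> {i1, i2, i3}"
    by blast+
  have zero: "dot3 (r i) (g k) = 0" if "i \<in> {i1, i2, i3, i4}" "k \<in> {i1, i2, i3, i4}" "i \<noteq> k" for i k
    using that biorth \<open>{i1, i2, i3, i4} \<subseteq> I\<close> by blast
  have nonzero: "dot3 (r i) (g i) \<noteq> 0" if "i \<in> {i1, i2, i3, i4}" for i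
    using that biorth \<open>{i1, i2, i3, i4} \<subseteq> I\<close> by blast
  have distinct: "distinct [i1, i2, i3, i4]"
    using \<open>i4 \<notin> {i1, i2, i3}\<close> \<open>i1 \<noteq> i2\<close> \<open>i2 \<noteq> i3\<close> \<open>i1 \<noteq> i3\<close> by auto
  define a b c where "a = g i1" and "b = g i2" and "c = g i3"
  txt \<open>The Gram matrix of r i1, r i2, r i3 against a, b, c is diagonal, so a, b, c are
    independent; r i4 is orthogonal to all three, hence zero.\<close>
  have "det3 (r i1) (r i2) (r i3) * det3 a b c = dot3 (r i1) a * dot3 (r i2) b * dot3 (r i3) c"
    unfolding det3_mult_det3 a_def b_def c_def using distinct by (simp add: zero det3_def)
  then have "det3 a b c \<noteq> 0"
    by (auto simp: a_def b_def c_def nonzero)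
  moreover have "dot3 (r i4) a = 0" "dot3 (r i4) b = 0" "dot3 (r i4) c = 0"
    unfolding a_def b_def c_def using distinct by (auto intro: zero)
  then have "vsc (det3 a b c) (r i4) = vzero"
    unfolding vsc_det3_eq by (simp add: vsc_def vadd_def vzero_def)
  ultimately have "r i4 = vzero"
    by (simp add: vsc_def vzero_def prod_eq_iff)
  then show False
    using nonzero[of i4] by (cases "g i4") (simp add: vzero_def)
qed

lemma Fq_power_q_power:
  assumes "c \<in> Fq q"
  shows "c ^ q ^ k = c"
proof (induction k)
  case (Suc k)
  then show ?case
    using assms by (simp add: Fq_def power_mult mult.commute[of q])
qed simp

lemma Fq_power: "c \<in> Fq q \<Longrightarrow> c ^ n \<in> Fq q"
  unfolding Fq_def by (simp flip: power_mult add: mult.commute[of n] power_mult)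

definition Fq_span3 :: "nat \<Rightarrow> 'a::{finite,field} vec3 \<Rightarrow> 'a vec3 \<Rightarrow> 'a vec3 \<Rightarrow> 'a vec3 set" where
  "Fq_span3 q w1 w2 w3 = {vadd (vsc a w1) (vadd (vsc b w2) (vsc c w3)) | a b c. a \<in> Fq q \<and> b \<in> Fq q \<and> c \<in> Fq q}"

lemma is_plane_imp_Fq_span3: "is_plane q \<Pi> \<Longrightarrow> \<exists>w1 w2 w3. \<Pi> = Fq_span3 q w1 w2 w3"
  unfolding is_plane_def Fq_span3_def by blast

lemma vec_in_point: "v \<in> point q v"
  unfolding point_def Fq_def by (rule CollectI, rule exI[of _ 1]) (simp add: vsc_def)

lemma point_vsc:
  assumes "c \<in> Fq q" "c \<noteq> 0"
  shows "point q (vsc c v) = point q v"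
proof
  have vsc_vsc: "vsc d (vsc e w) = vsc (d * e) w" for d e :: 'a and w
    by (simp add: vsc_def mult.assoc)
  show "point q (vsc c v) \<subseteq> point q v"
    using assms(1) by (auto simp: point_def vsc_vsc Fq_def power_mult_distrib)
  show "point q v \<subseteq> point q (vsc c v)"
  proof
    fix z
    assume "z \<in> point q v"
    then obtain d where "d \<in> Fq q" "z = vsc d v"
      by (auto simp: point_def)
    moreover have "d / c \<in> Fq q"
      using \<open>d \<in> Fq q\<close> assms(1) by (simp add: Fq_def power_divide)
    ultimately show "z \<in> point q (vsc c v)"
      using assms(2) unfolding point_def by (auto simp: vsc_vsc intro!: exI[of _ "d / c"])
  qed
qed

lemma vV_mult_Fq:
  assumes "c \<in> Fq q"
  shows "vV q (c * x) = vsc (c ^ 3) (vV q x)"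
proof -
  have "c ^ (q ^ i + q ^ j + 1) = c ^ 3" for i j
    using assms by (simp add: power_add Fq_power_q_power power3_eq_cube)
  from this[of 4 2] this[of 3 1] this[of 4 1] show ?thesis
    by (simp add: vV_def vsc_def power_mult_distrib)
qed

lemma point_vV_eq_if_power_q_div_eq:
  fixes x y :: "'a::{finite,field}"
  assumes "x \<noteq> 0" "y \<noteq> 0" "x ^ q / x = y ^ q / y"
  shows "point q (vV q x) = point q (vV q y)"
proof -
  have "x / y \<in> Fq q"
    using assms by (simp add: Fq_def power_divide field_simps)
  moreover have "x = (x / y) * y"
    using assms(2) by simp
  ultimately have "vV q x = vsc ((x / y) ^ 3) (vV q y)"
    by (metis vV_mult_Fq)
  moreover have "(x / y) ^ 3 \<in> Fq q" "(x / y) ^ 3 \<noteq> 0"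
    using \<open>x / y \<in> Fq q\<close> assms(1,2) by (simp_all add: Fq_power)
  ultimately show ?thesis
    by (simp add: point_vsc)
qed

(* Obtained by expanding (a x - x^q) (b x - x^q)^(q^2) (c x - x^q)^(q^4) and reading each
   monomial in x as a Frobenius twist of a coordinate of vV q x. *)
fun separating_form :: "nat \<Rightarrow> 'a::field \<Rightarrow> 'a \<Rightarrow> 'a \<Rightarrow> 'a vec3 \<Rightarrow> 'a" where
  "separating_form q a b c (v1, v2, v3) =
     (let b' = b ^ q ^ 2; c' = c ^ q ^ 4 in
        a * b' * c' * v1 - a * b' * v2 ^ q ^ 5 - a * c' * v2 ^ q ^ 3 + a * v3 ^ q ^ 5
      - b' * c' * v2 ^ q + b' * v3 ^ q + c' * v3 ^ q ^ 3 - v1 ^ q)"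

context
  fixes q :: nat
  assumes frobenius_add: "\<And>x y :: 'a::{finite,field}. (x + y) ^ q = x ^ q + y ^ q"
    and power_q6_eq_self: "\<And>x :: 'a. x ^ q ^ 6 = x"
begin

lemma q_pos: "q > 0"
  using power_q6_eq_self[of 0] by (cases q) simp_all

lemma power_q_power_add: "(x + y) ^ q ^ k = x ^ q ^ k + y ^ q ^ k" for x y :: 'a
  by (induction k arbitrary: x y) (simp_all add: power_mult frobenius_add)

lemma power_q_power_diff: "(x - y) ^ q ^ k = x ^ q ^ k - y ^ q ^ k" for x y :: 'a
  using power_q_power_add[of "x - y" y k] by (simp add: algebra_simps)

lemma power_q_power_power_q_power: "(x ^ q ^ i) ^ q ^ k = x ^ q ^ ((i + k) mod 6)" for x :: 'a
proof -
  have x_pow: "x ^ (q ^ 6) ^ n = x" for n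
    by (induction n) (simp_all add: power_mult power_q6_eq_self)
  have "(x ^ q ^ i) ^ q ^ k = (x ^ (q ^ 6) ^ ((i + k) div 6)) ^ q ^ ((i + k) mod 6)"
    by (simp only: power_mult[symmetric] power_add[symmetric] mult_div_mod_eq)
  then show ?thesis
    by (simp only: x_pow)
qed

lemma separating_form_vV:
  "separating_form q a b c (vV q x) = (a * x - x ^ q) * (b * x - x ^ q) ^ q ^ 2 * (c * x - x ^ q) ^ q ^ 4"
  for x :: 'a
proof -
  define X where "X i = x ^ q ^ i" for i
  have X_power: "X i ^ q ^ k = X ((i + k) mod 6)" for i k
    unfolding X_def by (rule power_q_power_power_q_power)
  have v: "vV q x = (X 4 * X 2 * X 0, X 3 * X 1 * X 0, X 4 * X 1 * X 0)"
    by (simp add: vV_def X_def power_add)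
  have twists: "(X 4 * X 2 * X 0) ^ q = X 5 * X 3 * X 1"
    "(X 3 * X 1 * X 0) ^ q = X 4 * X 2 * X 1"
    "(X 3 * X 1 * X 0) ^ q ^ 3 = X 0 * X 4 * X 3"
    "(X 3 * X 1 * X 0) ^ q ^ 5 = X 2 * X 0 * X 5"
    "(X 4 * X 1 * X 0) ^ q = X 5 * X 2 * X 1"
    "(X 4 * X 1 * X 0) ^ q ^ 3 = X 1 * X 4 * X 3"
    "(X 4 * X 1 * X 0) ^ q ^ 5 = X 3 * X 0 * X 5"
    using X_power[of _ 1]
    by (simp_all add: power_mult_distrib X_power flip: One_nat_def numeral_2_eq_2)
  have "separating_form q a b c (vV q x) = (a * X 0 - X 1) * (b ^ q ^ 2 * X 2 - X 3) * (c ^ q ^ 4 * X 4 - X 5)"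
    unfolding v separating_form.simps Let_def twists by (simp add: ring_distribs mult_ac add_ac)
  moreover have "(b * X 0 - X 1) ^ q ^ 2 = b ^ q ^ 2 * X 2 - X 3"
    "(c * X 0 - X 1) ^ q ^ 4 = c ^ q ^ 4 * X 4 - X 5"
    by (simp_all add: power_q_power_diff power_mult_distrib X_power flip: numeral_2_eq_2)
  ultimately show ?thesis
    unfolding X_def by simp
qed

lemma separating_form_lincomb:
  assumes "\<alpha> \<in> Fq q" "\<beta> \<in> Fq q" "\<gamma> \<in> Fq q"
  shows "separating_form q a b c (vadd (vsc \<alpha> w1) (vadd (vsc \<beta> w2) (vsc \<gamma> (w3 :: 'a vec3))))
    = \<alpha> * separating_form q a b c w1 + \<beta> * separating_form q a b c w2 + \<gamma> * separating_form q a b c w3"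
proof -
  have "\<alpha> ^ q = \<alpha>" "\<beta> ^ q = \<beta>" "\<gamma> ^ q = \<gamma>"
    using assms by (simp_all add: Fq_def)
  moreover have "\<alpha> ^ q ^ k = \<alpha>" "\<beta> ^ q ^ k = \<beta>" "\<gamma> ^ q ^ k = \<gamma>" for k
    using assms by (simp_all add: Fq_power_q_power)
  ultimately show ?thesis
    by (cases w1, cases w2, cases w3)
      (simp only: separating_form.simps vadd_def vsc_def prod.sel Let_def frobenius_add power_q_power_add power_mult_distrib,
       simp add: algebra_simps)
qed

lemma separating_form_vV_eq_0_iff:
  fixes x :: 'a
  assumes "x \<noteq> 0"
  shows "separating_form q a b c (vV q x) = 0 \<longleftrightarrow> x ^ q / x \<in> {a, b, c}"
  using assms q_pos by (auto simp: separating_form_vV field_simps)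

lemma card_le_3_if_vV_in_Fq_span3:
  fixes X :: "'a set"
  assumes "0 \<notin> X" "inj_on (\<lambda>x. x ^ q / x) X"
    and "\<And>x. x \<in> X \<Longrightarrow> vV q x \<in> Fq_span3 q w1 w2 w3"
  shows "card X \<le> 3"
proof (rule ccontr)
  define u where "u x = x ^ q / x" for x :: 'a
  assume "\<not> card X \<le> 3"
  then have "4 \<le> card X"
    by simp
  txt \<open>A separating form has only three parameters, so we work inside a 4-subset.\<close>
  then obtain Y where "Y \<subseteq> X" "card Y = 4"
    by (rule obtain_subset_with_card_n)
  have "inj_on u Y"
    using assms(2) \<open>Y \<subseteq> X\<close> unfolding u_def by (rule inj_on_subset)
  have "\<exists>a b c. u ` (Y - {y}) = {a, b, c}" if "y \<in> Y" for y
  proof -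
    have "card (u ` (Y - {y})) = 3"
      using that \<open>card Y = 4\<close> \<open>inj_on u Y\<close> by (simp add: card_image inj_on_diff)
    then show ?thesis
      by (auto simp: card_3_iff)
  qed
  then obtain a b c where abc: "\<And>y. y \<in> Y \<Longrightarrow> u ` (Y - {y}) = {a y, b y, c y}"
    by metis
  have "\<forall>x\<in>Y. \<exists>\<alpha> \<beta> \<gamma>. \<alpha> \<in> Fq q \<and> \<beta> \<in> Fq q \<and> \<gamma> \<in> Fq q \<and>
      vV q x = vadd (vsc \<alpha> w1) (vadd (vsc \<beta> w2) (vsc \<gamma> w3))"
    using assms(3) \<open>Y \<subseteq> X\<close> unfolding Fq_span3_def by blast
  then obtain \<alpha> \<beta> \<gamma> where coeffs: "\<forall>x\<in>Y. \<alpha> x \<in> Fq q \<and> \<beta> x \<in> Fq q \<and> \<gamma> x \<in> Fq q \<and>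
      vV q x = vadd (vsc (\<alpha> x) w1) (vadd (vsc (\<beta> x) w2) (vsc (\<gamma> x) w3))"
    by metis
  define L where "L y = separating_form q (a y) (b y) (c y)" for y
  have "card Y \<le> 3"
  proof (rule card_le_3_if_biorthogonal)
    fix x y
    assume "x \<in> Y" "y \<in> Y"
    have "dot3 (\<alpha> x, \<beta> x, \<gamma> x) (L y w1, L y w2, L y w3) = L y (vV q x)"
      using coeffs \<open>x \<in> Y\<close> by (simp add: L_def separating_form_lincomb)
    also have "\<dots> = 0 \<longleftrightarrow> u x \<in> u ` (Y - {y})"
      unfolding L_def abc[OF \<open>y \<in> Y\<close>] u_def
      using assms(1) \<open>Y \<subseteq> X\<close> \<open>x \<in> Y\<close> by (intro separating_form_vV_eq_0_iff) blast
    also have "\<dots> \<longleftrightarrow> x \<noteq> y"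
      using inj_on_image_mem_iff[OF \<open>inj_on u Y\<close>] \<open>x \<in> Y\<close> by auto
    finally show "dot3 (\<alpha> x, \<beta> x, \<gamma> x) (L y w1, L y w2, L y w3) = 0 \<longleftrightarrow> x \<noteq> y" .
  qed
  then show False
    using \<open>card Y = 4\<close> by simp
qed

lemma card_le_3_if_Vpts_in_Fq_span3:
  fixes S :: "'a vec3 set set"
  assumes "S \<subseteq> Vpts q" "\<Union>S \<subseteq> Fq_span3 q w1 w2 w3"
  shows "card S \<le> 3"
proof -
  have "\<forall>P\<in>S. \<exists>x. x \<noteq> 0 \<and> P = point q (vV q x)"
    using assms(1) unfolding Vpts_def by blast
  then obtain gen where gen_nonzero: "\<And>P. P \<in> S \<Longrightarrow> gen P \<noteq> 0"
    and point_gen: "\<And>P. P \<in> S \<Longrightarrow> point q (vV q (gen P)) = P"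
    by metis
  have "inj_on gen S"
    by (rule inj_onI) (metis point_gen)
  moreover have "card (gen ` S) \<le> 3"
  proof (rule card_le_3_if_vV_in_Fq_span3)
    show "0 \<notin> gen ` S"
      using gen_nonzero by (auto simp: image_iff)
    have "P = P'" if "P \<in> S" "P' \<in> S" and "gen P ^ q / gen P = gen P' ^ q / gen P'" for P P'
    proof -
      have "point q (vV q (gen P)) = point q (vV q (gen P'))"
        using that by (intro point_vV_eq_if_power_q_div_eq gen_nonzero)
      then show ?thesis
        using that point_gen by simp
    qed
    then show "inj_on (\<lambda>x. x ^ q / x) (gen ` S)"
      by (auto simp: inj_on_def)
    show "vV q x \<in> Fq_span3 q w1 w2 w3" if "x \<in> gen ` S" for x
      using that point_gen vec_in_point assms(2) by blast
  qed
  ultimately show ?thesis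
    by (simp add: card_image)
qed

end

theorem mainTheorem19:
  fixes q :: nat
  assumes "\<exists>p n. prime p \<and> n > 0 \<and> q = p ^ n"
    and "card (UNIV :: 'a::{finite,field} set) = q ^ 6"
  shows "\<forall>P1\<in>Vpts q. \<forall>P2\<in>Vpts q. \<forall>P3\<in>Vpts q. \<forall>P4\<in>Vpts q.
           distinct [P1, P2, P3, P4] \<longrightarrow>
           \<not> (\<exists>\<Pi>::'a vec3 set. is_plane q \<Pi> \<and> P1 \<union> P2 \<union> P3 \<union> P4 \<subseteq> \<Pi>)"
proof (intro ballI impI notI)
  obtain p n where "prime p" "q = p ^ n"
    using assms(1) by blast
  then have "CHAR('a) = p"
    using assms(2) by (intro CHAR_eq_if_card_UNIV_eq_prime_power[of p "n * 6"]) (simp_all add: power_mult)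
  then have frobenius_add: "(x + y) ^ q = x ^ q + y ^ q" for x y :: 'a
    using \<open>prime p\<close> \<open>q = p ^ n\<close> by (intro freshmans_dream') simp_all
  have power_q6_eq_self: "x ^ q ^ 6 = x" for x :: 'a
    using finite_field_power_card_UNIV_eq_self[of x] assms(2) by simp
  fix P1 P2 P3 P4
  assume "P1 \<in> Vpts q" "P2 \<in> Vpts q" "P3 \<in> Vpts q" "P4 \<in> Vpts q" "distinct [P1, P2, P3, P4]"
    and "\<exists>\<Pi>::'a vec3 set. is_plane q \<Pi> \<and> P1 \<union> P2 \<union> P3 \<union> P4 \<subseteq> \<Pi>"
  then obtain w1 w2 w3 where "P1 \<union> P2 \<union> P3 \<union> P4 \<subseteq> Fq_span3 q w1 w2 w3"
    by (metis is_plane_imp_Fq_span3)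
  then have "card {P1, P2, P3, P4} \<le> 3"
    using \<open>P1 \<in> Vpts q\<close> \<open>P2 \<in> Vpts q\<close> \<open>P3 \<in> Vpts q\<close> \<open>P4 \<in> Vpts q\<close>
    by (intro card_le_3_if_Vpts_in_Fq_span3[OF frobenius_add power_q6_eq_self]) auto
  moreover have "card {P1, P2, P3, P4} = 4"
    using distinct_card[OF \<open>distinct [P1, P2, P3, P4]\<close>] by simp
  ultimately show False
    by simp
qed

end
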